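(* Let $G$ be a finite simple graph that contains neither $3K_1$ (three pairwise non-adjacent vertices) nor $K_1\cup K_5$ (the disjoint union of a single vertex and a complete graph on $5$ vertices) as an induced subgraph. Then $$\chi(G)\leq \frac{7}{4}\omega(G).$$
   Context: All graphs are simple, finite and undirected. $\chi(G)$ is the chromatic number of $G$ (the smallest $k$ such that $V(G)$ can be partitioned into $k$ independent sets) and $\omega(G)$ is the clique number of $G$ (the largest number of pairwise adjacent vertices). *)

theory Defs
  imports Complex_Main
begin

definition simple_graph :: "'a set \<Rightarrow> ('a \<Rightarrow> 'a \<Rightarrow> bool) \<Rightarrow> bool" where
  "simple_graph V E \<longleftrightarrow> finite V \<and> (\<forall>x y. E x y \<longrightarrow> E y x)
     \<and> (\<forall>x. \<not> E x x) \<and> (\<forall>x y. E x y \<longrightarrow> x \<in> V \<and> y \<in> V)"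

definition is_clique :: "'a set \<Rightarrow> ('a \<Rightarrow> 'a \<Rightarrow> bool) \<Rightarrow> 'a set \<Rightarrow> bool" where
  "is_clique V E K \<longleftrightarrow> K \<subseteq> V \<and> (\<forall>x\<in>K. \<forall>y\<in>K. x \<noteq> y \<longrightarrow> E x y)"

definition clique_number :: "'a set \<Rightarrow> ('a \<Rightarrow> 'a \<Rightarrow> bool) \<Rightarrow> nat" where
  "clique_number V E = Max (card ` {K. is_clique V E K})"

definition is_colouring :: "'a set \<Rightarrow> ('a \<Rightarrow> 'a \<Rightarrow> bool) \<Rightarrow> nat \<Rightarrow> ('a \<Rightarrow> nat) \<Rightarrow> bool" where
  "is_colouring V E k c \<longleftrightarrow> (\<forall>v\<in>V. c v < k) \<and> (\<forall>x\<in>V. \<forall>y\<in>V. E x y \<longrightarrow> c x \<noteq> c y)"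

definition chromatic_number :: "'a set \<Rightarrow> ('a \<Rightarrow> 'a \<Rightarrow> bool) \<Rightarrow> nat" where
  "chromatic_number V E = (LEAST k. \<exists>c. is_colouring V E k c)"

definition has_induced_3K1 :: "'a set \<Rightarrow> ('a \<Rightarrow> 'a \<Rightarrow> bool) \<Rightarrow> bool" where
  "has_induced_3K1 V E \<longleftrightarrow> (\<exists>a\<in>V. \<exists>b\<in>V. \<exists>c\<in>V. a \<noteq> b \<and> a \<noteq> c \<and> b \<noteq> c
      \<and> \<not> E a b \<and> \<not> E a c \<and> \<not> E b c)"

definition has_induced_K1_K5 :: "'a set \<Rightarrow> ('a \<Rightarrow> 'a \<Rightarrow> bool) \<Rightarrow> bool" where
  "has_induced_K1_K5 V E \<longleftrightarrow> (\<exists>v\<in>V. \<exists>K. is_clique V E K \<and> card K = 5 \<and> v \<notin> K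
      \<and> (\<forall>x\<in>K. \<not> E v x))"

end

(*
  Pass to the complement H of G: it is triangle-free (no 3K_1) and has maximum degree at most 4
  (no K_1 + K_5), its independence number is omega(G), and the edges of a maximum matching of H
  together with the unmatched vertices partition V into cliques of H, i.e. independent sets of G;
  hence chi(G) <= n - nu(H).  It remains to show 4 (n - nu) <= 7 alpha for every
  induced subgraph of H, by induction on n.  A vertex whose removal lowers nu is deleted; a
  disconnected graph splits into parts on which both sides add up.  Otherwise Gallai's lemma gives
  n <= 2 nu + 1, and Shearer's bound alpha >= sum_v f(d(v)) >= 127 n / 425 for triangle-free graphs
  of maximum degree 4, together with alpha >= 2 for n >= 3, finishes the count.
*)

theory Submission
  imports Defs
begin

(* Shearer's weights f(d) = (1 + (d^2 - d) f(d - 1)) / (d^2 + 1); the convexity facts used by the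
   potential argument are checked on the explicit values for d <= 4. *)
fun shearer_weight :: "nat \<Rightarrow> real" where
  "shearer_weight 0 = 1"
| "shearer_weight (Suc d) =
     (1 + real (Suc d) * real d * shearer_weight d) / (real (Suc d) ^ 2 + 1)"

definition shearer_decrement :: "nat \<Rightarrow> real" where
  "shearer_decrement d = shearer_weight (d - 1) - shearer_weight d"

lemma shearer_weight_values:
  "shearer_weight 1 = 1/2" "shearer_weight 2 = 2/5"
  "shearer_weight 3 = 17/50" "shearer_weight 4 = 127/425"
  by (simp_all add: numeral_eq_Suc)

lemma shearer_weight_recurrence:
  "(real d + 1) * shearer_weight d - 1 = real d * (real d - 1) * shearer_decrement d"
proof (cases d)
  case (Suc k)
  have "0 < real (Suc k) ^ 2 + 1"
    by (intro add_nonneg_pos) simp_all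
  then have "(real (Suc k) ^ 2 + 1) * shearer_weight (Suc k)
      = 1 + real (Suc k) * real k * shearer_weight k"
    by simp
  then show ?thesis
    using Suc by (simp add: shearer_decrement_def algebra_simps power2_eq_square del: shearer_weight.simps)
qed (simp add: shearer_decrement_def)

lemma le_4_cases: "(d::nat) \<le> 4 \<Longrightarrow> d = 0 \<or> d = 1 \<or> d = 2 \<or> d = 3 \<or> d = 4"
  by auto

lemma shearer_weight_convex:
  assumes "e \<le> d" "d \<le> 4"
  shows "shearer_weight d - shearer_weight (d - e) \<le> - real e * shearer_decrement d"
  using le_4_cases[OF assms(2)] le_4_cases[of e] assms
  by (auto simp: shearer_decrement_def shearer_weight_values)

lemma shearer_decrement_antimono:
  assumes "1 \<le> a" "1 \<le> b" "a \<le> 4" "b \<le> 4"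
  shows "(real a - real b) * (shearer_decrement a - shearer_decrement b) \<le> 0"
  using le_4_cases[OF assms(3)] le_4_cases[OF assms(4)] assms(1,2)
  by (auto simp: shearer_decrement_def shearer_weight_values)

lemma shearer_weight_ge: "d \<le> 4 \<Longrightarrow> 127/425 \<le> shearer_weight d"
  by (drule le_4_cases) (auto simp: shearer_weight_values)

lemma sum_sum_Diff_singleton:
  fixes g :: "'a \<Rightarrow> real"
  assumes "finite A"
  shows "(\<Sum>v\<in>A. \<Sum>x\<in>A - {v}. g x) = (real (card A) - 1) * (\<Sum>x\<in>A. g x)"
proof -
  have "(\<Sum>v\<in>A. \<Sum>x\<in>A - {v}. g x) = (\<Sum>v\<in>A. sum g A - g v)"
    using assms by (intro sum.cong) (auto simp: sum_diff1)
  then show ?thesis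
    by (simp add: sum_subtractf algebra_simps)
qed

lemma colouring_from_clique_cover:
  assumes "finite P" "\<And>x. x \<in> V \<Longrightarrow> \<exists>K\<in>P. x \<in> K"
    and "\<And>K x y. K \<in> P \<Longrightarrow> x \<in> K \<Longrightarrow> y \<in> K \<Longrightarrow> x \<noteq> y \<Longrightarrow> R x y"
  obtains c :: "'a \<Rightarrow> nat" where "\<And>v. v \<in> V \<Longrightarrow> c v < card P"
    "\<And>x y. x \<in> V \<Longrightarrow> y \<in> V \<Longrightarrow> x \<noteq> y \<Longrightarrow> c x = c y \<Longrightarrow> R x y"
proof -
  obtain h where h: "bij_betw h P {0..<card P}"
    using ex_bij_betw_finite_nat[OF assms(1)] by blast
  define K where "K x = (SOME K. K \<in> P \<and> x \<in> K)" for x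
  have K: "K x \<in> P" "x \<in> K x" if "x \<in> V" for x
    using someI_ex[OF assms(2)[OF that, unfolded Bex_def]] unfolding K_def by auto
  show ?thesis
  proof
    show "h (K v) < card P" if "v \<in> V" for v
      using K(1)[OF that] h by (auto simp: bij_betw_def)
    show "R x y" if "x \<in> V" "y \<in> V" "x \<noteq> y" "h (K x) = h (K y)" for x y
    proof -
      have "K x = K y"
        using that K(1) h by (auto simp: bij_betw_def inj_on_def)
      then show ?thesis
        using assms(3)[of "K x" x y] K that by metis
    qed
  qed
qed

(* With n = 2m + 1 the claim is 2 (n + 1) <= 7 a; as 127/425 > 2/7, Shearer's bound leaves only
   n <= 10, where a >= 2 suffices. *)
lemma deficiency_arith:
  fixes n m a :: nat
  assumes "n \<le> 2 * m + 1" "2 * m \<le> n" "127 * n \<le> 425 * a" "3 \<le> n \<Longrightarrow> 2 \<le> a"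
  shows "4 * (n - m) \<le> 7 * a"
proof (rule ccontr)
  assume c: "\<not> 4 * (n - m) \<le> 7 * a"
  then have "7 * a < 2 * n + 2"
    using assms(1,2) by linarith
  then have "n \<le> 10" "a \<le> 3"
    using assms(3) by linarith+
  then have "n = 0 \<or> n = 1 \<or> n = 2 \<or> n = 3 \<or> n = 4 \<or> n = 5 \<or> n = 6 \<or> n = 7 \<or> n = 8 \<or> n = 9 \<or> n = 10"
    "a = 0 \<or> a = 1 \<or> a = 2 \<or> a = 3"
    by presburger+
  then show False
    using assms c by (elim disjE; simp; arith)
qed

locale finite_graph =
  fixes V :: "'a set" and H :: "'a \<Rightarrow> 'a \<Rightarrow> bool"
  assumes finite_vertices: "finite V"
    and sym: "H x y \<Longrightarrow> H y x"
    and irrefl: "\<not> H x x"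
begin

definition nbrs :: "'a set \<Rightarrow> 'a \<Rightarrow> 'a set" where
  "nbrs W x = {y \<in> W. H x y}"

definition degree :: "'a set \<Rightarrow> 'a \<Rightarrow> nat" where
  "degree W x = card (nbrs W x)"

definition independent :: "'a set \<Rightarrow> 'a set \<Rightarrow> bool" where
  "independent S I \<longleftrightarrow> I \<subseteq> S \<and> (\<forall>x\<in>I. \<forall>y\<in>I. \<not> H x y)"

definition alpha :: "'a set \<Rightarrow> nat" where
  "alpha S = Max (card ` {I. independent S I})"

lemma finite_vertex_subset: "S \<subseteq> V \<Longrightarrow> finite S"
  using finite_vertices finite_subset by blast

lemma finite_nbrs: "S \<subseteq> V \<Longrightarrow> finite (nbrs S x)"
  unfolding nbrs_def using finite_vertex_subset by auto

lemma degree_mono: "S \<subseteq> T \<Longrightarrow> T \<subseteq> V \<Longrightarrow> degree S x \<le> degree T x"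
  unfolding degree_def nbrs_def using finite_vertex_subset by (auto intro: card_mono)

lemma degree_Un:
  assumes "A \<inter> B = {}" "A \<subseteq> V" "B \<subseteq> V"
  shows "degree (A \<union> B) x = degree A x + degree B x"
proof -
  have "nbrs (A \<union> B) x = nbrs A x \<union> nbrs B x" "nbrs A x \<inter> nbrs B x = {}"
    using assms(1) by (auto simp: nbrs_def)
  then show ?thesis
    unfolding degree_def using assms finite_nbrs by (simp add: card_Un_disjoint)
qed

lemma degree_outside_closed_nbhd:
  assumes W: "W \<subseteq> V" and x: "x \<in> W - insert v (nbrs W v)"
  shows "degree W x = degree (W - insert v (nbrs W v)) x + degree (nbrs W v) x"
proof -
  have "nbrs W x = nbrs ((W - insert v (nbrs W v)) \<union> nbrs W v) x"
    using x sym[of x v] unfolding nbrs_def by blast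
  then show ?thesis
    using degree_Un[of "W - insert v (nbrs W v)" "nbrs W v" x] W
    by (auto simp: degree_def nbrs_def)
qed

lemma degree_pos: "S \<subseteq> V \<Longrightarrow> y \<in> S \<Longrightarrow> H x y \<Longrightarrow> 1 \<le> degree S x"
  unfolding degree_def using finite_nbrs[of S x] card_gt_0_iff[of "nbrs S x"]
  by (auto simp: nbrs_def)

lemma sum_nbrs_swap:
  assumes "W \<subseteq> V"
  shows "(\<Sum>u\<in>W. \<Sum>x\<in>nbrs W u. \<phi> u x) = (\<Sum>u\<in>W. \<Sum>x\<in>nbrs W u. \<phi> x u)"
proof -
  have fin: "finite W"
    using finite_vertex_subset[OF assms] .
  have "(\<Sum>u\<in>W. \<Sum>x\<in>nbrs W u. \<phi> u x) = (\<Sum>x\<in>W. \<Sum>u\<in>{u\<in>W. H u x}. \<phi> u x)"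
    unfolding nbrs_def by (rule sum.swap_restrict[OF fin fin])
  also have "\<dots> = (\<Sum>x\<in>W. \<Sum>u\<in>nbrs W x. \<phi> u x)"
  proof -
    have "{u\<in>W. H u x} = nbrs W x" for x
      unfolding nbrs_def using sym by blast
    then show ?thesis
      by simp
  qed
  finally show ?thesis .
qed

lemma finite_independent_sets: "S \<subseteq> V \<Longrightarrow> finite {I. independent S I}"
  by (rule finite_subset[of _ "Pow S"]) (auto simp: independent_def finite_vertex_subset)

lemma card_le_alpha: "S \<subseteq> V \<Longrightarrow> independent S I \<Longrightarrow> card I \<le> alpha S"
  unfolding alpha_def using finite_independent_sets by (auto intro: Max_ge)

lemma maximum_independent_set_exists:
  assumes "S \<subseteq> V"
  obtains I where "independent S I" "card I = alpha S"
proof -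
  have "independent S {}"
    by (simp add: independent_def)
  then have "alpha S \<in> card ` {I. independent S I}"
    unfolding alpha_def using finite_independent_sets[OF assms] by (intro Max_in) auto
  then show ?thesis
    using that by auto
qed

lemma alpha_mono: "S \<subseteq> T \<Longrightarrow> T \<subseteq> V \<Longrightarrow> alpha S \<le> alpha T"
  by (metis maximum_independent_set_exists card_le_alpha independent_def order_trans)

lemma alpha_Un:
  assumes "A \<subseteq> V" "B \<subseteq> V" "A \<inter> B = {}"
    and no_edges: "\<And>x y. x \<in> A \<Longrightarrow> y \<in> B \<Longrightarrow> \<not> H x y"
  shows "alpha A + alpha B \<le> alpha (A \<union> B)"
proof -
  obtain I J where I: "independent A I" "card I = alpha A" and J: "independent B J" "card J = alpha B"
    using maximum_independent_set_exists assms(1,2) by metis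
  have "independent (A \<union> B) (I \<union> J)"
    using I J no_edges sym unfolding independent_def by blast
  then have "card (I \<union> J) \<le> alpha (A \<union> B)"
    using assms(1,2) by (intro card_le_alpha) auto
  moreover have "finite I" "finite J" "I \<inter> J = {}"
    using I J assms(1-3) finite_vertex_subset unfolding independent_def by (blast intro: finite_subset)+
  ultimately show ?thesis
    using I J by (simp add: card_Un_disjoint)
qed

lemma alpha_insert_nonadjacent:
  assumes S: "S \<subseteq> V" and v: "v \<in> S"
  shows "alpha (S - insert v (nbrs S v)) + 1 \<le> alpha S"
proof -
  obtain I where I: "independent (S - insert v (nbrs S v)) I" "card I = alpha (S - insert v (nbrs S v))"
    using maximum_independent_set_exists S by (metis Diff_subset order_trans)
  have "independent S (insert v I)"
    using I(1) v sym irrefl unfolding independent_def nbrs_def by blast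
  then have "card (insert v I) \<le> alpha S"
    by (rule card_le_alpha[OF S])
  moreover have "v \<notin> I" "finite I"
    using I(1) S finite_vertex_subset unfolding independent_def by (blast intro: finite_subset)+
  ultimately show ?thesis
    using I(2) by simp
qed

definition edge_in :: "'a set \<Rightarrow> 'a set \<Rightarrow> bool" where
  "edge_in S e \<longleftrightarrow> (\<exists>x y. e = {x, y} \<and> x \<in> S \<and> y \<in> S \<and> H x y)"

definition matching :: "'a set \<Rightarrow> 'a set set \<Rightarrow> bool" where
  "matching S M \<longleftrightarrow> (\<forall>e\<in>M. edge_in S e) \<and> pairwise disjnt M"

definition matching_number :: "'a set \<Rightarrow> nat" where
  "matching_number S = Max (card ` {M. matching S M})"

definition maximum_matching :: "'a set \<Rightarrow> 'a set set \<Rightarrow> bool" where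
  "maximum_matching S M \<longleftrightarrow> matching S M \<and> card M = matching_number S"

lemma edge_in_subset: "edge_in S e \<Longrightarrow> e \<subseteq> S"
  unfolding edge_in_def by auto

lemma edge_in_mono: "edge_in S e \<Longrightarrow> S \<subseteq> T \<Longrightarrow> edge_in T e"
  unfolding edge_in_def by blast

lemma card_edge_in: "edge_in S e \<Longrightarrow> card e = 2"
  unfolding edge_in_def using irrefl by (metis card_2_iff)

lemma finite_edge_in: "edge_in S e \<Longrightarrow> finite e"
  unfolding edge_in_def by auto

lemma edge_in_adjacent: "edge_in S e \<Longrightarrow> x \<in> e \<Longrightarrow> y \<in> e \<Longrightarrow> x \<noteq> y \<Longrightarrow> H x y"
  unfolding edge_in_def using sym by blast

lemma edge_in_other_end:
  assumes "edge_in S e" "x \<in> e"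
  obtains y where "e = {x, y}" "y \<in> S" "H x y"
  using assms sym unfolding edge_in_def by (metis insert_commute insertE singletonD)

lemma matching_insert:
  assumes "matching S M" "edge_in S e" "\<And>f. f \<in> M \<Longrightarrow> e \<inter> f = {}"
  shows "matching S (insert e M)"
  using assms unfolding matching_def pairwise_insert disjnt_def by (auto simp: Int_commute)

lemma matching_subset: "matching S M \<Longrightarrow> M' \<subseteq> M \<Longrightarrow> matching S M'"
  unfolding matching_def by (auto intro: pairwise_subset)

lemma matching_mono: "matching S M \<Longrightarrow> S \<subseteq> T \<Longrightarrow> matching T M"
  unfolding matching_def using edge_in_mono by blast

lemma matching_disjoint: "matching S M \<Longrightarrow> e \<in> M \<Longrightarrow> f \<in> M \<Longrightarrow> x \<in> e \<Longrightarrow> x \<in> f \<Longrightarrow> e = f"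
  unfolding matching_def pairwise_def disjnt_def by blast

lemma Union_matching_subset: "matching S M \<Longrightarrow> \<Union>M \<subseteq> S"
  unfolding matching_def using edge_in_subset by blast

lemma finite_matchings: "S \<subseteq> V \<Longrightarrow> finite {M. matching S M}"
  by (rule finite_subset[of _ "Pow (Pow S)"])
    (auto simp: matching_def finite_vertex_subset dest: edge_in_subset)

lemma finite_matching: "S \<subseteq> V \<Longrightarrow> matching S M \<Longrightarrow> finite M"
  using finite_matchings unfolding matching_def
  by (metis Pow_iff edge_in_subset finite_Pow_iff finite_vertex_subset rev_finite_subset subsetI)

lemma card_le_matching_number: "S \<subseteq> V \<Longrightarrow> matching S M \<Longrightarrow> card M \<le> matching_number S"
  unfolding matching_number_def using finite_matchings by (auto intro: Max_ge)

lemma maximum_matching_exists: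
  assumes "S \<subseteq> V"
  obtains M where "maximum_matching S M"
proof -
  have "matching S {}"
    by (simp add: matching_def)
  then have "matching_number S \<in> card ` {M. matching S M}"
    unfolding matching_number_def using finite_matchings[OF assms] by (intro Max_in) auto
  then show ?thesis
    using that by (auto simp: maximum_matching_def)
qed

lemma card_Union_matching:
  assumes "matching S M" "finite M"
  shows "card (\<Union>M) = 2 * card M"
proof -
  have "card (\<Union>M) = (\<Sum>e\<in>M. card e)"
    using assms card_edge_in unfolding matching_def
    by (intro card_Union_disjoint) (auto intro: finite_edge_in)
  also have "\<dots> = (\<Sum>e\<in>M. 2)"
    using assms card_edge_in unfolding matching_def by (intro sum.cong) auto
  also have "\<dots> = 2 * card M"
    by simp
  finally show ?thesis .
qed

lemma card_Union_maximum_matching: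
  "S \<subseteq> V \<Longrightarrow> maximum_matching S M \<Longrightarrow> card (\<Union>M) = 2 * matching_number S"
  unfolding maximum_matching_def by (metis card_Union_matching finite_matching)

lemma matching_number_le_card:
  assumes S: "S \<subseteq> V"
  shows "2 * matching_number S \<le> card S"
proof -
  obtain M where M: "maximum_matching S M"
    using maximum_matching_exists[OF S] .
  then have "card (\<Union>M) \<le> card S"
    using Union_matching_subset finite_vertex_subset[OF S]
    by (intro card_mono) (auto simp: maximum_matching_def)
  then show ?thesis
    using card_Union_maximum_matching[OF S M] by simp
qed

lemma matching_number_mono:
  assumes "S \<subseteq> T" "T \<subseteq> V"
  shows "matching_number S \<le> matching_number T"
proof -
  obtain M where "maximum_matching S M"
    using maximum_matching_exists assms by blast
  then show ?thesis
    using card_le_matching_number[OF assms(2)] matching_mono[OF _ assms(1)]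
    unfolding maximum_matching_def by metis
qed

lemma matching_number_le_Diff_singleton:
  assumes S: "S \<subseteq> V"
  shows "matching_number S \<le> matching_number (S - {v}) + 1"
proof -
  obtain M where M: "maximum_matching S M"
    using maximum_matching_exists[OF S] .
  then have mM: "matching S M" and finM: "finite M"
    using finite_matching[OF S] by (auto simp: maximum_matching_def)
  define M' where "M' = {e\<in>M. v \<notin> e}"
  have "edge_in (S - {v}) e" if "e \<in> M'" for e
    using that mM unfolding M'_def matching_def edge_in_def by blast
  then have "matching (S - {v}) M'"
    using matching_subset[OF mM, of M'] unfolding M'_def matching_def by blast
  then have "card M' \<le> matching_number (S - {v})"
    using S by (intro card_le_matching_number) auto
  moreover have "card {e\<in>M. v \<in> e} \<le> 1"
  proof -
    have "\<forall>e\<in>{e\<in>M. v \<in> e}. \<forall>f\<in>{e\<in>M. v \<in> e}. e = f"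
      using matching_disjoint[OF mM] by blast
    then show ?thesis
      using finM by (simp add: card_le_Suc0_iff_eq)
  qed
  moreover have "card M \<le> card M' + card {e\<in>M. v \<in> e}"
    proof -
    have "M = M' \<union> {e\<in>M. v \<in> e}"
      unfolding M'_def by blast
    then show ?thesis
      using card_Un_le[of M' "{e\<in>M. v \<in> e}"] by simp
  qed
  ultimately show ?thesis
    using M by (simp add: maximum_matching_def)
qed

lemma matching_number_Un:
  assumes A: "A \<subseteq> V" and B: "B \<subseteq> V" and disj: "A \<inter> B = {}"
  shows "matching_number A + matching_number B \<le> matching_number (A \<union> B)"
proof -
  obtain MA MB where MA: "maximum_matching A MA" and MB: "maximum_matching B MB"
    using maximum_matching_exists A B by metis
  then have mA: "matching A MA" and mB: "matching B MB" and fin: "finite MA" "finite MB"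
    using finite_matching A B by (auto simp: maximum_matching_def)
  have edges_disj: "e \<inter> f = {}" if "e \<in> MA" "f \<in> MB" for e f
    using that Union_matching_subset[OF mA] Union_matching_subset[OF mB] disj by blast
  have "pairwise disjnt (MA \<union> MB)"
  proof (rule pairwiseI)
    fix e f assume ef: "e \<in> MA \<union> MB" "f \<in> MA \<union> MB" "e \<noteq> f"
    have "pairwise disjnt MA" "pairwise disjnt MB"
      using mA mB by (simp_all add: matching_def)
    then show "disjnt e f"
      using ef edges_disj[of e f] edges_disj[of f e] pairwiseD[of disjnt _ e f]
      by (cases "e \<in> MA"; cases "f \<in> MA") (auto simp: disjnt_def)
  qed
  then have "matching (A \<union> B) (MA \<union> MB)"
    using mA mB edge_in_mono[of A _ "A \<union> B"] edge_in_mono[of B _ "A \<union> B"]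
    unfolding matching_def by blast
  then have "card (MA \<union> MB) \<le> matching_number (A \<union> B)"
    using A B by (intro card_le_matching_number) auto
  moreover have "MA \<inter> MB = {}"
  proof -
    have "e \<noteq> {}" if "e \<in> MA" for e
      using that mA card_edge_in unfolding matching_def by fastforce
    then show ?thesis
      using edges_disj by blast
  qed
  ultimately show ?thesis
    using MA MB fin by (simp add: card_Un_disjoint maximum_matching_def)
qed

lemma maximum_matching_covers_edge:
  assumes S: "S \<subseteq> V" and M: "maximum_matching S M"
    and "x \<in> S" "y \<in> S" "H x y"
  shows "x \<in> \<Union>M \<or> y \<in> \<Union>M"
proof (rule ccontr)
  assume uncovered: "\<not> ?thesis"
  then have "matching S (insert {x, y} M)"
    using M assms(3-5) by (intro matching_insert) (auto simp: maximum_matching_def edge_in_def)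
  moreover have "{x, y} \<notin> M"
    using uncovered by blast
  moreover have "finite M"
    using finite_matching[OF S] M by (simp add: maximum_matching_def)
  ultimately have "card M + 1 \<le> matching_number S"
    using card_le_matching_number[OF S] by fastforce
  then show False
    using M by (simp add: maximum_matching_def)
qed

lemma finite_Union_matching: "S \<subseteq> V \<Longrightarrow> matching S M \<Longrightarrow> finite (\<Union>M)"
  using Union_matching_subset finite_vertex_subset finite_subset by metis

lemma card_Diff_Union_maximum_matchings:
  assumes S: "S \<subseteq> V" and M: "maximum_matching S M" and N: "maximum_matching S N"
  shows "card (\<Union>M - \<Union>N) = card (\<Union>N - \<Union>M)"
proof -
  have "finite (\<Union>M)" "finite (\<Union>N)"
    using M N finite_Union_matching[OF S] by (auto simp: maximum_matching_def)
  moreover have "card (\<Union>M) = card (\<Union>N)"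
    using M N card_Union_maximum_matching[OF S] by simp
  ultimately show ?thesis
    by (simp add: card_Diff_subset_Int Int_commute)
qed

lemma maximum_matching_swap:
  assumes S: "S \<subseteq> V" and N: "maximum_matching S N"
    and xy: "x \<in> S" "y \<in> S" "H x y" "x \<notin> \<Union>N" and f: "f \<in> N" "y \<in> f"
  shows "maximum_matching S (insert {x, y} (N - {f}))"
proof -
  have mN: "matching S N" and "finite N"
    using N finite_matching[OF S] by (auto simp: maximum_matching_def)
  have "{x, y} \<inter> g = {}" if "g \<in> N - {f}" for g
    using that xy(4) matching_disjoint[OF mN _ f(1) _ f(2), of g] by blast
  then have "matching S (insert {x, y} (N - {f}))"
    using xy(1-3) by (intro matching_insert[OF matching_subset[OF mN Diff_subset]]) (auto simp: edge_in_def)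
  moreover have "{x, y} \<notin> N"
    using xy(4) by blast
  then have "card (insert {x, y} (N - {f})) = card N"
    using card_Suc_Diff1[OF \<open>finite N\<close> f(1)] \<open>finite N\<close> by simp
  ultimately show ?thesis
    using N by (simp add: maximum_matching_def)
qed

lemma maximum_matching_exchange:
  assumes S: "S \<subseteq> V" and M: "maximum_matching S M" and N: "maximum_matching S N"
    and w: "w \<in> \<Union>M" "w \<notin> \<Union>N" and two: "2 \<le> card (\<Union>N - \<Union>M)"
  obtains N' where "maximum_matching S N'" "w \<notin> \<Union>N'" "card (N \<inter> M) < card (N' \<inter> M)"
proof -
  have mM: "matching S M" and "finite N"
    using M N finite_matching[OF S] by (auto simp: maximum_matching_def)
  have "\<not> \<Union>M - \<Union>N \<subseteq> {w}"
  proof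
    assume "\<Union>M - \<Union>N \<subseteq> {w}"
    then have "card (\<Union>M - \<Union>N) \<le> 1"
      using card_mono[of "{w}"] by fastforce
    then show False
      using two card_Diff_Union_maximum_matchings[OF S M N] by simp
  qed
  then obtain x e where x: "x \<notin> \<Union>N" "x \<noteq> w" and e: "e \<in> M" "x \<in> e"
    by blast
  moreover have "edge_in S e"
    using e(1) mM by (simp add: matching_def)
  ultimately obtain y where y: "e = {x, y}" "y \<in> S" "H x y"
    using edge_in_other_end by blast
  have "x \<in> S"
    using e mM Union_matching_subset by blast
  then have "y \<in> \<Union>N"
    using maximum_matching_covers_edge[OF S N _ y(2,3)] x(1) by blast
  then obtain f where f: "f \<in> N" "y \<in> f"
    by blast
  define N' where "N' = insert e (N - {f})"
  have "maximum_matching S N'"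
    unfolding N'_def y(1) using maximum_matching_swap[OF S N \<open>x \<in> S\<close> y(2,3) x(1) f] .
  moreover have "w \<notin> \<Union>N'"
    unfolding N'_def using w(2) x(2) y(1) \<open>y \<in> \<Union>N\<close> by auto
  moreover have "f \<notin> M"
    using matching_disjoint[OF mM _ e(1) f(2)] y(1) f(1) x(1) by auto
  then have "N' \<inter> M = insert e (N \<inter> M)" "e \<notin> N"
    unfolding N'_def using e x(1) by auto
  then have "card (N \<inter> M) < card (N' \<inter> M)"
    using \<open>finite N\<close> by simp
  ultimately show ?thesis
    using that by blast
qed

definition adj_in :: "'a set \<Rightarrow> 'a \<Rightarrow> 'a \<Rightarrow> bool" where
  "adj_in S x y \<longleftrightarrow> x \<in> S \<and> y \<in> S \<and> H x y"

definition connected_in :: "'a set \<Rightarrow> bool" where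
  "connected_in S \<longleftrightarrow> (\<forall>x\<in>S. \<forall>y\<in>S. (adj_in S)\<^sup>*\<^sup>* x y)"

lemma missed_by_maximum_matching:
  assumes S: "S \<subseteq> V" and "matching_number (S - {v}) = matching_number S"
  obtains N where "maximum_matching S N" "v \<notin> \<Union>N"
proof -
  obtain N where N: "matching (S - {v}) N" "card N = matching_number (S - {v})"
    using maximum_matching_exists[of "S - {v}"] S unfolding maximum_matching_def by blast
  then have "maximum_matching S N"
    using assms(2) matching_mono[OF N(1) Diff_subset] by (simp add: maximum_matching_def)
  moreover have "v \<notin> \<Union>N"
    using Union_matching_subset[OF N(1)] by blast
  ultimately show ?thesis
    using that by blast
qed

lemma maximum_matching_missing_max_overlap:
  assumes S: "S \<subseteq> V" and "maximum_matching S N0" "w \<notin> \<Union>N0" "finite M"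
  obtains N where "maximum_matching S N" "w \<notin> \<Union>N"
    "\<And>N'. maximum_matching S N' \<Longrightarrow> w \<notin> \<Union>N' \<Longrightarrow> card (N' \<inter> M) \<le> card (N \<inter> M)"
proof -
  have "\<forall>N. maximum_matching S N \<and> w \<notin> \<Union>N \<longrightarrow> card (N \<inter> M) < Suc (card M)"
    using \<open>finite M\<close> by (simp add: card_mono le_imp_less_Suc)
  then have "\<exists>N. (maximum_matching S N \<and> w \<notin> \<Union>N) \<and> (\<forall>N'. maximum_matching S N' \<and> w \<notin> \<Union>N'
      \<longrightarrow> card (N' \<inter> M) \<le> card (N \<inter> M))"
    using assms(2,3) by (intro Lattices_Big.ex_has_greatest_nat) auto
  then show ?thesis
    using that by blast
qed

lemma unmatched_vertices_eq:
  assumes S: "S \<subseteq> V"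
    and avoidable: "\<And>v. v \<in> S \<Longrightarrow> matching_number (S - {v}) = matching_number S"
  shows "(adj_in S ^^ n) u v \<Longrightarrow> maximum_matching S M \<Longrightarrow> u \<notin> \<Union>M \<Longrightarrow> v \<notin> \<Union>M \<Longrightarrow> u = v"
proof (induction n arbitrary: u M)
  case (Suc n)
  then obtain w where uw: "adj_in S u w" and wv: "(adj_in S ^^ n) w v"
    using relpowp_Suc_D2 by metis
  have "w \<in> \<Union>M"
    using maximum_matching_covers_edge[OF S Suc.prems(2)] uw Suc.prems(3) by (auto simp: adj_in_def)
  have "w \<in> S" "finite M"
    using uw finite_matching[OF S] Suc.prems(2) by (auto simp: adj_in_def maximum_matching_def)
  \<comment> \<open>among the maximum matchings missing w, take one sharing as many edges with M as possible\<close>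
  then obtain N where N: "maximum_matching S N" "w \<notin> \<Union>N"
    and greatest: "\<And>N'. maximum_matching S N' \<Longrightarrow> w \<notin> \<Union>N' \<Longrightarrow> card (N' \<inter> M) \<le> card (N \<inter> M)"
    using maximum_matching_missing_max_overlap[OF S] missed_by_maximum_matching[OF S avoidable]
    by metis
  have "u \<in> \<Union>N"
    using maximum_matching_covers_edge[OF S N(1)] uw N(2) by (auto simp: adj_in_def)
  have "v \<in> \<Union>N"
    using Suc.IH[OF wv N(1) N(2)] \<open>w \<in> \<Union>M\<close> Suc.prems(4) by blast
  show "u = v"
  proof (rule ccontr)
    assume "u \<noteq> v"
    have "finite (\<Union>N - \<Union>M)"
      using N(1) finite_Union_matching[OF S] by (simp add: maximum_matching_def)
    then have "card {u, v} \<le> card (\<Union>N - \<Union>M)"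
      using \<open>u \<in> \<Union>N\<close> \<open>v \<in> \<Union>N\<close> Suc.prems(3,4) by (intro card_mono) auto
    then obtain N' where "maximum_matching S N'" "w \<notin> \<Union>N'" "card (N \<inter> M) < card (N' \<inter> M)"
      using maximum_matching_exchange[OF S Suc.prems(2) N(1) \<open>w \<in> \<Union>M\<close> N(2)] \<open>u \<noteq> v\<close> by auto
    then show False
      using greatest by fastforce
  qed
qed simp

lemma gallai_lemma:
  assumes S: "S \<subseteq> V" and "connected_in S"
    and "\<And>v. v \<in> S \<Longrightarrow> matching_number (S - {v}) = matching_number S"
  shows "card S \<le> 2 * matching_number S + 1"
proof -
  obtain M where M: "maximum_matching S M"
    using maximum_matching_exists[OF S] .
  have "u = v" if "u \<in> S - \<Union>M" "v \<in> S - \<Union>M" for u v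
  proof -
    have "(adj_in S)\<^sup>*\<^sup>* u v"
      using \<open>connected_in S\<close> that unfolding connected_in_def by blast
    then obtain n where "(adj_in S ^^ n) u v"
      using rtranclp_imp_relpowp by metis
    then show ?thesis
      using unmatched_vertices_eq[OF S assms(3) _ M] that by (meson DiffD2)
  qed
  then have "card (S - \<Union>M) \<le> 1"
    using card_le_Suc0_iff_eq[of "S - \<Union>M"] finite_vertex_subset[OF S] by (simp del: One_nat_def)
  moreover have "card S = card (\<Union>M) + card (S - \<Union>M)"
  proof -
    have "\<Union>M \<subseteq> S"
      using M Union_matching_subset by (simp add: maximum_matching_def)
    then have "card (S - \<Union>M) = card S - card (\<Union>M)" "card (\<Union>M) \<le> card S"
      using finite_vertex_subset[OF S] by (auto intro: card_Diff_subset card_mono finite_subset)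
    then show ?thesis
      by simp
  qed
  ultimately show ?thesis
    using card_Union_maximum_matching[OF S M] by linarith
qed

lemma connected_in_if_reachable:
  assumes "\<And>y. y \<in> S \<Longrightarrow> (adj_in S)\<^sup>*\<^sup>* r y"
  shows "connected_in S"
  unfolding connected_in_def
proof (intro ballI)
  fix x y assume "x \<in> S" "y \<in> S"
  have "(adj_in S)\<inverse>\<inverse> = adj_in S"
    unfolding adj_in_def fun_eq_iff using sym by blast
  then have "(adj_in S)\<^sup>*\<^sup>* x r"
    using rtranclp_converseI[OF assms[OF \<open>x \<in> S\<close>]] by simp
  then show "(adj_in S)\<^sup>*\<^sup>* x y"
    using assms[OF \<open>y \<in> S\<close>] by (rule rtranclp_trans)
qed

lemma disconnected_split:
  assumes "S \<noteq> {}" "\<not> connected_in S"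
  obtains A B where "A \<noteq> {}" "B \<noteq> {}" "A \<union> B = S" "A \<inter> B = {}"
    "\<And>x y. x \<in> A \<Longrightarrow> y \<in> B \<Longrightarrow> \<not> H x y"
proof -
  obtain r where r: "r \<in> S"
    using assms(1) by blast
  define A where "A = {y. (adj_in S)\<^sup>*\<^sup>* r y}"
  have "y \<in> S" if "(adj_in S)\<^sup>*\<^sup>* r y" for y
    using that by (induction rule: rtranclp_induct) (auto simp: r adj_in_def)
  then have "A \<subseteq> S"
    unfolding A_def by blast
  have "A \<noteq> S"
    using assms(2) connected_in_if_reachable[of S r] unfolding A_def by blast
  moreover have "\<not> H x y" if "x \<in> A" "y \<in> S - A" for x y
  proof
    assume "H x y"
    then have "adj_in S x y"
      using that \<open>A \<subseteq> S\<close> by (auto simp: adj_in_def)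
    then have "y \<in> A"
      using that(1) unfolding A_def by (auto intro: rtranclp.rtrancl_into_rtrancl)
    then show False
      using that(2) by blast
  qed
  moreover have "r \<in> A"
    by (simp add: A_def)
  ultimately show ?thesis
    using that[of A "S - A"] \<open>A \<subseteq> S\<close> by blast
qed

lemma clique_cover_by_maximum_matching:
  obtains c :: "'a \<Rightarrow> nat" where "\<And>v. v \<in> V \<Longrightarrow> c v < card V - matching_number V"
    "\<And>x y. x \<in> V \<Longrightarrow> y \<in> V \<Longrightarrow> x \<noteq> y \<Longrightarrow> c x = c y \<Longrightarrow> H x y"
proof -
  obtain M where M: "maximum_matching V M"
    using maximum_matching_exists by blast
  then have mM: "matching V M" and finM: "finite M" and "\<Union>M \<subseteq> V"
    using finite_matching Union_matching_subset by (auto simp: maximum_matching_def)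
  define P where "P = M \<union> (\<lambda>x. {x}) ` (V - \<Union>M)"
  have "M \<inter> (\<lambda>x. {x}) ` (V - \<Union>M) = {}"
    using mM card_edge_in unfolding matching_def by force
  then have "card P = card M + card (V - \<Union>M)"
    unfolding P_def using finM finite_vertices by (simp add: card_Un_disjoint card_image)
  also have "\<dots> = card V - matching_number V"
    using M \<open>\<Union>M \<subseteq> V\<close> card_Union_maximum_matching[OF subset_refl M] finite_vertices
      matching_number_le_card[OF subset_refl]
    by (simp add: card_Diff_subset finite_subset maximum_matching_def)
  finally have "card P = card V - matching_number V" .
  moreover have "finite P"
    unfolding P_def using finM finite_vertices by simp
  moreover have "\<exists>K\<in>P. x \<in> K" if "x \<in> V" for x
    using that unfolding P_def by blast
  moreover have "H x y" if "K \<in> P" "x \<in> K" "y \<in> K" "x \<noteq> y" for K x y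
    using that mM edge_in_adjacent unfolding P_def matching_def by auto
  ultimately show ?thesis
    using colouring_from_clique_cover[of P V H] that by metis
qed

lemma chromatic_number_le_card_minus_matching_number:
  assumes complement: "\<And>x y. x \<in> V \<Longrightarrow> y \<in> V \<Longrightarrow> x \<noteq> y \<Longrightarrow> H x y \<longleftrightarrow> \<not> E x y"
    and loopless: "\<And>x. \<not> E x x"
  shows "chromatic_number V E \<le> card V - matching_number V"
proof -
  obtain c where c_range: "\<And>v. v \<in> V \<Longrightarrow> c v < card V - matching_number V"
    and c_classes: "\<And>x y. x \<in> V \<Longrightarrow> y \<in> V \<Longrightarrow> x \<noteq> y \<Longrightarrow> c x = c y \<Longrightarrow> H x y"
    using clique_cover_by_maximum_matching by blast
  have "c x \<noteq> c y" if "x \<in> V" "y \<in> V" "E x y" for x y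
    using that c_classes[of x y] complement[of x y] loopless[of x] by blast
  then have "is_colouring V E (card V - matching_number V) c"
    unfolding is_colouring_def using c_range by blast
  then show ?thesis
    unfolding chromatic_number_def by (intro Least_le exI)
qed

definition shearer_potential :: "'a set \<Rightarrow> real" where
  "shearer_potential W = (\<Sum>x\<in>W. shearer_weight (degree W x))"

end

locale triangle_free_graph = finite_graph +
  assumes triangle_free: "H x y \<Longrightarrow> H y z \<Longrightarrow> H x z \<Longrightarrow> False"
begin

lemma sum_degree_into_nbrs:
  assumes W: "W \<subseteq> V"
  shows "(\<Sum>x\<in>W - insert v (nbrs W v). real (degree (nbrs W v) x) * \<phi> x)
    = (\<Sum>u\<in>nbrs W v. \<Sum>x\<in>nbrs W u - {v}. \<phi> x)"
proof -
  have "(\<Sum>x\<in>W - insert v (nbrs W v). real (degree (nbrs W v) x) * \<phi> x)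
      = (\<Sum>x\<in>W - insert v (nbrs W v). \<Sum>u\<in>{u\<in>nbrs W v. H x u}. \<phi> x)"
    by (simp add: degree_def nbrs_def)
  also have "\<dots> = (\<Sum>u\<in>nbrs W v. \<Sum>x\<in>{x\<in>W - insert v (nbrs W v). H x u}. \<phi> x)"
    using sum.swap_restrict[where g = "\<lambda>x u. \<phi> x" and R = H,
        OF finite_Diff[OF finite_vertex_subset[OF W]] finite_nbrs[OF W]] by simp
  also have "\<dots> = (\<Sum>u\<in>nbrs W v. \<Sum>x\<in>nbrs W u - {v}. \<phi> x)"
  proof -
    have "{x\<in>W - insert v (nbrs W v). H x u} = nbrs W u - {v}" if "u \<in> nbrs W v" for u
      \<comment> \<open>a common neighbour of u and v would close a triangle\<close>
      using that sym triangle_free unfolding nbrs_def by blast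
    then show ?thesis
      by simp
  qed
  finally show ?thesis .
qed

lemma alpha_ge_2:
  assumes S: "S \<subseteq> V" and "3 \<le> card S"
  shows "2 \<le> alpha S"
proof -
  obtain T where "T \<subseteq> S" "card T = 3"
    using assms(2) by (meson obtain_subset_with_card_n)
  then obtain a b c where abc: "{a, b, c} \<subseteq> S" "a \<noteq> b" "a \<noteq> c" "b \<noteq> c"
    by (metis card_3_iff)
  then obtain x y where xy: "x \<in> S" "y \<in> S" "x \<noteq> y" "\<not> H x y"
    using triangle_free[of a b c] by auto
  then have "independent S {x, y}"
    using irrefl sym[of y x] unfolding independent_def by auto
  then have "card {x, y} \<le> alpha S"
    by (rule card_le_alpha[OF S])
  then show ?thesis
    using xy(3) by simp
qed

end

locale triangle_free_subquartic_graph = triangle_free_graph +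
  assumes degree_le_4: "x \<in> V \<Longrightarrow> degree V x \<le> 4"
begin

lemma degree_le_4_subset: "S \<subseteq> V \<Longrightarrow> x \<in> S \<Longrightarrow> degree S x \<le> 4"
  using degree_mono[of S V x] degree_le_4[of x] by auto

lemma shearer_potential_delete_closed_nbhd:
  assumes W: "W \<subseteq> V" and v: "v \<in> W"
  defines "d \<equiv> degree W"
  shows "shearer_potential W - shearer_potential (W - insert v (nbrs W v))
    \<le> shearer_weight (d v) + (\<Sum>u\<in>nbrs W v. shearer_weight (d u))
       - (\<Sum>u\<in>nbrs W v. \<Sum>x\<in>nbrs W u - {v}. shearer_decrement (d x))"
proof -
  define N where "N = nbrs W v"
  define W' where "W' = W - insert v N"
  have "v \<notin> N" "insert v N \<subseteq> W" "finite W" "finite N"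
    using irrefl v W finite_vertex_subset finite_nbrs by (auto simp: N_def nbrs_def)
  then have potential_split: "shearer_potential W
      = (\<Sum>x\<in>W'. shearer_weight (d x)) + shearer_weight (d v) + (\<Sum>u\<in>N. shearer_weight (d u))"
    unfolding shearer_potential_def d_def W'_def
    using sum.subset_diff[of "insert v N" W] by (simp add: add.assoc)
  have "(\<Sum>x\<in>W'. shearer_weight (d x)) - shearer_potential W'
      \<le> (\<Sum>x\<in>W'. - real (degree N x) * shearer_decrement (d x))"
    unfolding shearer_potential_def sum_subtractf[symmetric]
  proof (rule sum_mono)
    fix x assume x: "x \<in> W'"
    have "d x \<le> 4"
      unfolding d_def using x degree_le_4_subset[OF W] by (auto simp: W'_def)
    then show "shearer_weight (d x) - shearer_weight (degree W' x)
        \<le> - real (degree N x) * shearer_decrement (d x)"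
      using shearer_weight_convex[of "degree N x" "d x"] degree_outside_closed_nbhd[OF W x[unfolded W'_def N_def]]
      unfolding d_def W'_def N_def by simp
  qed
  also have "\<dots> = - (\<Sum>u\<in>N. \<Sum>x\<in>nbrs W u - {v}. shearer_decrement (d x))"
    unfolding W'_def N_def using sum_degree_into_nbrs[OF W] by (simp add: sum_negf)
  finally show ?thesis
    using potential_split unfolding N_def W'_def by linarith
qed

lemma sum_nbrs_decrement_ge:
  assumes W: "W \<subseteq> V"
  defines "D \<equiv> \<lambda>u. real (degree W u)" and "G \<equiv> \<lambda>u. shearer_decrement (degree W u)"
  shows "(\<Sum>u\<in>W. (D u - 1) * D u * G u) \<le> (\<Sum>u\<in>W. (D u - 1) * (\<Sum>x\<in>nbrs W u. G x))"
proof -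
  define Q where "Q = (\<Sum>u\<in>W. \<Sum>x\<in>nbrs W u. (D u - 1) * (G u - G x))"
  have "(\<Sum>x\<in>nbrs W u. (D u - 1) * (G u - G x))
      = (D u - 1) * D u * G u - (D u - 1) * (\<Sum>x\<in>nbrs W u. G x)" for u
  proof -
    have "(\<Sum>x\<in>nbrs W u. (D u - 1) * (G u - G x)) = (D u - 1) * (D u * G u - (\<Sum>x\<in>nbrs W u. G x))"
      by (simp add: sum_distrib_left[symmetric] sum_subtractf D_def degree_def)
    then show ?thesis
      by (simp add: algebra_simps)
  qed
  then have "(\<Sum>u\<in>W. (D u - 1) * D u * G u) - (\<Sum>u\<in>W. (D u - 1) * (\<Sum>x\<in>nbrs W u. G x)) = Q"
    unfolding Q_def by (simp add: sum_subtractf)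
  moreover have "2 * Q = (\<Sum>u\<in>W. \<Sum>x\<in>nbrs W u. (D u - D x) * (G u - G x))"
  proof -
    \<comment> \<open>symmetrise over the two orientations of each edge\<close>
    have "Q = (\<Sum>u\<in>W. \<Sum>x\<in>nbrs W u. (D x - 1) * (G x - G u))"
      unfolding Q_def by (rule sum_nbrs_swap[OF W])
    then have "2 * Q = (\<Sum>u\<in>W. \<Sum>x\<in>nbrs W u. (D u - 1) * (G u - G x) + (D x - 1) * (G x - G u))"
      unfolding Q_def sum.distrib by linarith
    also have "\<dots> = (\<Sum>u\<in>W. \<Sum>x\<in>nbrs W u. (D u - D x) * (G u - G x))"
      by (intro sum.cong refl) (simp add: algebra_simps)
    finally show ?thesis .
  qed
  moreover have "\<dots> \<le> 0"
  proof (intro sum_nonpos ballI)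
    fix u x assume u: "u \<in> W" and x: "x \<in> nbrs W u"
    then have "x \<in> W" "H u x" "H x u"
      using sym by (auto simp: nbrs_def)
    then show "(D u - D x) * (G u - G x) \<le> 0"
      unfolding D_def G_def using u W
      by (intro shearer_decrement_antimono degree_pos[OF W] degree_le_4_subset[OF W])
  qed
  ultimately show ?thesis
    by linarith
qed

lemma sum_shearer_local_loss_le_card:
  assumes W: "W \<subseteq> V"
  defines "d \<equiv> degree W"
  shows "(\<Sum>v\<in>W. shearer_weight (d v) + (\<Sum>u\<in>nbrs W v. shearer_weight (d u))
      - (\<Sum>u\<in>nbrs W v. \<Sum>x\<in>nbrs W u - {v}. shearer_decrement (d x))) \<le> real (card W)"
proof -
  define D where "D u = real (d u)" for u
  define F where "F u = shearer_weight (d u)" for u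
  define G where "G u = shearer_decrement (d u)" for u
  have "(\<Sum>v\<in>W. \<Sum>u\<in>nbrs W v. F u) = (\<Sum>v\<in>W. D v * F v)"
    using sum_nbrs_swap[OF W, of "\<lambda>v u. F u"] by (simp add: D_def d_def degree_def)
  moreover have "(\<Sum>v\<in>W. \<Sum>u\<in>nbrs W v. \<Sum>x\<in>nbrs W u - {v}. G x)
      = (\<Sum>u\<in>W. (D u - 1) * (\<Sum>x\<in>nbrs W u. G x))"
    using sum_nbrs_swap[OF W, of "\<lambda>v u. \<Sum>x\<in>nbrs W u - {v}. G x"]
    by (simp add: sum_sum_Diff_singleton finite_nbrs[OF W] D_def d_def degree_def)
  moreover have "(\<Sum>u\<in>W. (D u - 1) * D u * G u) \<le> (\<Sum>u\<in>W. (D u - 1) * (\<Sum>x\<in>nbrs W u. G x))"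
    using sum_nbrs_decrement_ge[OF W] by (simp add: D_def G_def d_def)
  moreover have "(\<Sum>v\<in>W. F v + D v * F v - (D v - 1) * D v * G v) = real (card W)"
    using shearer_weight_recurrence by (simp add: D_def F_def G_def algebra_simps)
  ultimately show ?thesis
    unfolding F_def[symmetric] G_def[symmetric]
    by (simp add: sum.distrib sum_subtractf)
qed

theorem shearer_potential_le_alpha: "S \<subseteq> V \<Longrightarrow> shearer_potential S \<le> real (alpha S)"
proof (induction "card S" arbitrary: S rule: less_induct)
  case less
  note S = \<open>S \<subseteq> V\<close>
  show ?case
  proof (cases "S = {}")
    case True
    then show ?thesis
      by (simp add: shearer_potential_def)
  next
    case False
    define S' where "S' v = S - insert v (nbrs S v)" for v
    \<comment> \<open>the losses summed over all v are at most card S, so some v loses at most 1\<close>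
    have "\<exists>v\<in>S. shearer_potential S - shearer_potential (S' v) \<le> 1"
    proof (rule ccontr)
      assume "\<not> ?thesis"
      then have "(\<Sum>v\<in>S. 1) < (\<Sum>v\<in>S. shearer_potential S - shearer_potential (S' v))"
        using False finite_vertex_subset[OF S] by (intro sum_strict_mono) auto
      also have "\<dots> \<le> (\<Sum>v\<in>S. shearer_weight (degree S v)
          + (\<Sum>u\<in>nbrs S v. shearer_weight (degree S u))
          - (\<Sum>u\<in>nbrs S v. \<Sum>x\<in>nbrs S u - {v}. shearer_decrement (degree S x)))"
        unfolding S'_def by (intro sum_mono shearer_potential_delete_closed_nbhd[OF S])
      also have "\<dots> \<le> real (card S)"
        by (rule sum_shearer_local_loss_le_card[OF S])
      finally show False
        by simp
    qed
    then obtain v where v: "v \<in> S" and loss: "shearer_potential S - shearer_potential (S' v) \<le> 1"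
      by blast
    have "card (S' v) < card S"
      using v finite_vertex_subset[OF S] unfolding S'_def by (intro psubset_card_mono) auto
    then have "shearer_potential (S' v) \<le> real (alpha (S' v))"
      using less S unfolding S'_def by blast
    moreover have "alpha (S' v) + 1 \<le> alpha S"
      using alpha_insert_nonadjacent[OF S v] unfolding S'_def .
    ultimately show ?thesis
      using loss by linarith
  qed
qed

lemma alpha_ge_shearer: "S \<subseteq> V \<Longrightarrow> 127 * card S \<le> 425 * alpha S"
proof -
  assume S: "S \<subseteq> V"
  have "(\<Sum>x\<in>S. 127/425) \<le> shearer_potential S"
    unfolding shearer_potential_def using shearer_weight_ge degree_le_4_subset[OF S] by (intro sum_mono) auto
  then have "real (card S) * 127 / 425 \<le> real (alpha S)"
    using shearer_potential_le_alpha[OF S] by simp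
  then show ?thesis
    by linarith
qed

theorem four_deficiency_le_seven_alpha:
  "S \<subseteq> V \<Longrightarrow> 4 * (card S - matching_number S) \<le> 7 * alpha S"
proof (induction "card S" arbitrary: S rule: less_induct)
  case less
  note S = \<open>S \<subseteq> V\<close>
  have IH: "4 * (card T - matching_number T) \<le> 7 * alpha T" if "T \<subset> S" for T
    using less.hyps that S finite_vertex_subset[OF S] psubset_card_mono by (meson order_trans psubset_imp_subset)
  show ?case
  proof (cases "\<exists>v\<in>S. matching_number (S - {v}) < matching_number S")
    case True
    then obtain v where v: "v \<in> S" "matching_number (S - {v}) < matching_number S"
      by blast
    then have "4 * (card (S - {v}) - matching_number (S - {v})) \<le> 7 * alpha (S - {v})"
      by (intro IH) auto
    moreover have "alpha (S - {v}) \<le> alpha S"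
      using S by (intro alpha_mono) auto
    moreover have "card (S - {v}) = card S - 1" "0 < card S"
      using v(1) finite_vertex_subset[OF S] card_gt_0_iff by auto
    ultimately show ?thesis
      using matching_number_le_Diff_singleton[OF S, of v] v(2) by linarith
  next
    case False
    then have avoidable: "matching_number (S - {v}) = matching_number S" if "v \<in> S" for v
      using that matching_number_mono[of "S - {v}" S] S by fastforce
    show ?thesis
    proof (cases "connected_in S")
      case True
      show ?thesis
        using gallai_lemma[OF S True avoidable] matching_number_le_card[OF S] alpha_ge_shearer[OF S]
          alpha_ge_2[OF S] by (intro deficiency_arith)
    next
      case False
      then obtain A B where AB: "A \<noteq> {}" "B \<noteq> {}" "A \<union> B = S" "A \<inter> B = {}"
        and no_edges: "\<And>x y. x \<in> A \<Longrightarrow> y \<in> B \<Longrightarrow> \<not> H x y"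
        by (metis connected_in_def disconnected_split empty_iff)
      then have sub: "A \<subset> S" "B \<subset> S" "A \<subseteq> V" "B \<subseteq> V"
        using S by blast+
      have "card S = card A + card B"
        using AB sub finite_vertex_subset by (metis card_Un_disjoint)
      moreover have "matching_number A + matching_number B \<le> matching_number S"
        using matching_number_Un[OF sub(3,4) AB(4)] AB(3) by simp
      moreover have "alpha A + alpha B \<le> alpha S"
        using alpha_Un[OF sub(3,4) AB(4) no_edges] AB(3) by simp
      moreover have "2 * matching_number A \<le> card A" "2 * matching_number B \<le> card B"
        using matching_number_le_card sub(3,4) by auto
      ultimately show ?thesis
        using IH[OF sub(1)] IH[OF sub(2)] by linarith
    qed
  qed
qed

end

definition complement_graph :: "'a set \<Rightarrow> ('a \<Rightarrow> 'a \<Rightarrow> bool) \<Rightarrow> 'a \<Rightarrow> 'a \<Rightarrow> bool" where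
  "complement_graph V E x y \<longleftrightarrow> x \<in> V \<and> y \<in> V \<and> x \<noteq> y \<and> \<not> E x y"

lemma complement_triangle_free_subquartic:
  assumes G: "simple_graph V E" and no_3K1: "\<not> has_induced_3K1 V E"
    and no_K1_K5: "\<not> has_induced_K1_K5 V E"
  shows "triangle_free_subquartic_graph V (complement_graph V E)"
proof -
  let ?H = "complement_graph V E"
  have independent_triple: "\<not> (?H a b \<and> ?H b c \<and> ?H a c)" for a b c
    using no_3K1 unfolding has_induced_3K1_def complement_graph_def by blast
  interpret triangle_free_graph V ?H
    using G independent_triple by unfold_locales (auto simp: simple_graph_def complement_graph_def)
  show ?thesis
  proof unfold_locales
    fix x assume x: "x \<in> V"
    show "degree V x \<le> 4"
    proof (rule ccontr)
      assume "\<not> ?thesis"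
      then have "5 \<le> card (nbrs V x)"
        by (simp add: degree_def)
      then obtain K where K: "K \<subseteq> nbrs V x" "card K = 5"
        by (meson obtain_subset_with_card_n)
      \<comment> \<open>two vertices of K that are non-adjacent in G would form a 3K_1 with x\<close>
      have "is_clique V E K"
        using K(1) independent_triple[of x] unfolding is_clique_def nbrs_def complement_graph_def
        by blast
      moreover have "x \<notin> K" "\<forall>y\<in>K. \<not> E x y"
        using K(1) by (auto simp: nbrs_def complement_graph_def)
      ultimately show False
        using no_K1_K5 x K(2) unfolding has_induced_K1_K5_def by blast
    qed
  qed
qed

theorem corollary3:
  fixes V :: "'a set" and E :: "'a \<Rightarrow> 'a \<Rightarrow> bool"
  assumes "simple_graph V E"
    and "\<not> has_induced_3K1 V E"
    and "\<not> has_induced_K1_K5 V E"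
  shows "real (chromatic_number V E) \<le> 7 / 4 * real (clique_number V E)"
proof -
  interpret triangle_free_subquartic_graph V "complement_graph V E"
    using complement_triangle_free_subquartic[OF assms] .
  have "{I. independent V I} = {K. is_clique V E K}"
    unfolding independent_def is_clique_def complement_graph_def by blast
  then have "alpha V = clique_number V E"
    unfolding alpha_def clique_number_def by simp
  moreover have "chromatic_number V E \<le> card V - matching_number V"
    using assms(1) by (intro chromatic_number_le_card_minus_matching_number)
      (auto simp: complement_graph_def simple_graph_def)
  moreover have "4 * (card V - matching_number V) \<le> 7 * alpha V"
    by (rule four_deficiency_le_seven_alpha) simp
  ultimately show ?thesis
    by linarith
qed

end
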